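(* Fix $A,b,c$ and a base sequence $(B_1,\dots,B_N;\mathcal{K}_0,\mathcal{J}_0,\mathcal{K}_{N+1},\mathcal{J}_{N+1})$. Its validity region $\mathcal{T}$, i.e. the set of all $(\beta,\gamma,T)\in\mathbb{R}^K\times\mathbb{R}^J\times[0,\infty)$ for which the base sequence is optimal, is a convex polyhedral cone.
   Context: Let $A$ be a real $K\times J$ matrix, $b\in\mathbb{R}^K$, $c\in\mathbb{R}^J$; the remaining data of M-CLP are $\beta\in\mathbb{R}^K$, $\gamma\in\mathbb{R}^J$ and the horizon $T$. (M-CLP: maximize $\int_{0-}^T(\gamma+(T-t)c)^\top dU(t)$ over nonnegative, non-decreasing, right-continuous $U$ with $U(0-)=0$ subject to $AU(t)\le\beta+bt$, $0\le t\le T$; M-CLP$^*$: minimize $\int_{0-}^T(\beta+(T-t)b)^\top dP(t)$ over nonnegative non-decreasing right-continuous $P$, $P(0-)=0$, subject to $A^\top P(t)\ge\gamma+ct$.) Bases: index sets $\mathcal{K}\subseteq\{1..K\},\mathcal{J}\subseteq\{1..J\}$ such that $\dot x_k$ ($k\in\mathcal{K}$), $u_j$ ($j\notin\mathcal{J}$) are $K$ variables with independent columns in $[A\ I]$; primal basic solution solves $Au+\dot x=b$ with $u_j=0$ ($j\in\mathcal{J}$), $\dot x_k=0$ ($k\notin\mathcal{K}$); dual basic solution solves $A^\top p-\dot q=c$ with $p_k=0$ ($k\in\mathcal{K}$), $\dot q_j=0$ ($j\notin\mathcal{J}$). Admissible: $u,p\ge0$. Adjacent: one pivot apart, primal variable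 $v_n$ leaving from $B_n$ to $B_{n+1}$. A base sequence consists of admissible, consecutively adjacent bases $B_1..B_N$ (index sets $\mathcal{K}_n,\mathcal{J}_n$, rates $u^n,\dot x^n,p^n,\dot q^n$) plus index sets $\mathcal{K}_0,\mathcal{J}_0,\mathcal{K}_{N+1},\mathcal{J}_{N+1}$ with $\mathcal{K}_0\subseteq\mathcal{K}_1$, $\mathcal{J}_{N+1}\subseteq\mathcal{J}_N$ (these depend only on $A,b,c$). The base-sequence system for data $(\beta,\gamma,T)$ in unknowns $\mathbf{u}^0,\mathbf{u}^N,q^N,\mathbf{q}^0\in\mathbb{R}^J$, $x^0,\mathbf{x}^N,\mathbf{p}^0,\mathbf{p}^N\in\mathbb{R}^K$, $\tau_1..\tau_N$, with $x^n=x^0+\sum_{m\le n}\dot x^m\tau_m$, $q^n=q^N+\sum_{m>n}\dot q^m\tau_m$, is: (a) $x^n_k=0$ if $v_n=\dot x_k$, $q^n_j=0$ if $v_n=u_j$ ($n=1..N-1$); (b) $\sum\tau_n=T$; (c) $\mathbf{u}^0_j=0$ ($j\in\mathcal{J}_0$), $x^0_k=0$ ($k\notin\mathcal{K}_0$), $\mathbf{p}^0_k=0$ ($k\in\mathcal{K}_0$), $\mathbf{q}^0_j=0$ ($j\notin\mathcal{J}_0$), $\mathbf{p}^N_k=0$ ($k\in\mathcal{K}_{N+1}$), $q^N_j=0$ ($j\notin\mathcal{J}_{N+1}$), $\mathbf{u}^N_j=0$ ($j\in\mathcal{J}_{N+1}$), $\mathbf{x}^N_k=0$ ($k\notin\mathcal{K}_{N+1}$);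 (d) $A\mathbf{u}^0+x^0=\beta$, $A^\top\mathbf{p}^N-q^N=\gamma$; (e) $A\mathbf{u}^N+\mathbf{x}^N-x^N=0$, $A^\top\mathbf{p}^0-\mathbf{q}^0+q^0=0$. The base sequence is optimal for $(\beta,\gamma,T)$ if this system has a solution in which all boundary values, all $\tau_n$, and all $x^n,q^n$ ($n=0..N$) are nonnegative. *)

theory Defs
  imports "HOL-Analysis.Analysis"
begin

text \<open>Primal variables of a basis are encoded as ('k + 'j):
  Inl k stands for the slack rate xdot_k, Inr j for u_j.\<close>

definition basic_vars :: "'k set \<Rightarrow> 'j set \<Rightarrow> ('k + 'j) set" where
  "basic_vars Ks Js = Inl ` Ks \<union> Inr ` (- Js)"

definition is_basis :: "real^'j::finite^'k::finite \<Rightarrow> 'k set \<Rightarrow> 'j set \<Rightarrow> bool" where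
  "is_basis A Ks Js \<longleftrightarrow>
     card Ks + card (- Js) = CARD('k) \<and>
     (\<forall>(a::'k \<Rightarrow> real) (w::'j \<Rightarrow> real).
        (\<Sum>k\<in>Ks. a k *s axis k (1::real)) + (\<Sum>j\<in>- Js. w j *s column j A) = 0 \<longrightarrow>
        (\<forall>k\<in>Ks. a k = 0) \<and> (\<forall>j\<in>- Js. w j = 0))"

definition primal_basic_sol ::
  "real^'j::finite^'k::finite \<Rightarrow> real^'k \<Rightarrow> 'k set \<Rightarrow> 'j set \<Rightarrow> real^'j \<Rightarrow> real^'k \<Rightarrow> bool" where
  "primal_basic_sol A b Ks Js u xd \<longleftrightarrow>
     A *v u + xd = b \<and> (\<forall>j\<in>Js. u $ j = 0) \<and> (\<forall>k. k \<notin> Ks \<longrightarrow> xd $ k = 0)"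

definition dual_basic_sol ::
  "real^'j::finite^'k::finite \<Rightarrow> real^'j \<Rightarrow> 'k set \<Rightarrow> 'j set \<Rightarrow> real^'k \<Rightarrow> real^'j \<Rightarrow> bool" where
  "dual_basic_sol A c Ks Js p qd \<longleftrightarrow>
     transpose A *v p - qd = c \<and> (\<forall>k\<in>Ks. p $ k = 0) \<and> (\<forall>j. j \<notin> Js \<longrightarrow> qd $ j = 0)"

definition base_sequence ::
  "real^'j::finite^'k::finite \<Rightarrow> real^'k \<Rightarrow> real^'j \<Rightarrow> nat \<Rightarrow> (nat \<Rightarrow> 'k set) \<Rightarrow> (nat \<Rightarrow> 'j set)
   \<Rightarrow> (nat \<Rightarrow> real^'j) \<Rightarrow> (nat \<Rightarrow> real^'k) \<Rightarrow> (nat \<Rightarrow> real^'k) \<Rightarrow> (nat \<Rightarrow> real^'j) \<Rightarrow> bool" where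
  "base_sequence A b c N Ks Js u xd p qd \<longleftrightarrow>
     1 \<le> N \<and>
     (\<forall>n\<in>{1..N}. is_basis A (Ks n) (Js n) \<and>
        primal_basic_sol A b (Ks n) (Js n) (u n) (xd n) \<and>
        dual_basic_sol A c (Ks n) (Js n) (p n) (qd n) \<and>
        (\<forall>j. 0 \<le> u n $ j) \<and> (\<forall>k. 0 \<le> p n $ k)) \<and>
     (\<forall>n\<in>{1..<N}. card (basic_vars (Ks n) (Js n) - basic_vars (Ks (Suc n)) (Js (Suc n))) = 1) \<and>
     Ks 0 \<subseteq> Ks 1 \<and> Js (N + 1) \<subseteq> Js N"

definition xtraj :: "real^'k::finite \<Rightarrow> (nat \<Rightarrow> real^'k) \<Rightarrow> (nat \<Rightarrow> real) \<Rightarrow> nat \<Rightarrow> real^'k" where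
  "xtraj x0 xd \<tau> n = x0 + (\<Sum>m\<in>{1..n}. \<tau> m *\<^sub>R xd m)"

definition qtraj :: "real^'j::finite \<Rightarrow> (nat \<Rightarrow> real^'j) \<Rightarrow> (nat \<Rightarrow> real) \<Rightarrow> nat \<Rightarrow> nat \<Rightarrow> real^'j" where
  "qtraj qN qd \<tau> N n = qN + (\<Sum>m\<in>{n<..N}. \<tau> m *\<^sub>R qd m)"

definition base_seq_optimal ::
  "real^'j::finite^'k::finite \<Rightarrow> nat \<Rightarrow> (nat \<Rightarrow> 'k set) \<Rightarrow> (nat \<Rightarrow> 'j set)
   \<Rightarrow> (nat \<Rightarrow> real^'k) \<Rightarrow> (nat \<Rightarrow> real^'j) \<Rightarrow> real^'k \<Rightarrow> real^'j \<Rightarrow> real \<Rightarrow> bool" where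
  "base_seq_optimal A N Ks Js xd qd \<beta> \<gamma> T \<longleftrightarrow>
     (\<exists>(bu0::real^'j) (buN::real^'j) (qN::real^'j) (bq0::real^'j)
        (x0::real^'k) (bxN::real^'k) (bp0::real^'k) (bpN::real^'k) (\<tau>::nat \<Rightarrow> real).
       \<comment> \<open>(a)\<close>
       (\<forall>n\<in>{1..<N}.
          (\<forall>k. Inl k \<in> basic_vars (Ks n) (Js n) - basic_vars (Ks (Suc n)) (Js (Suc n))
                \<longrightarrow> xtraj x0 xd \<tau> n $ k = 0) \<and>
          (\<forall>j. Inr j \<in> basic_vars (Ks n) (Js n) - basic_vars (Ks (Suc n)) (Js (Suc n))
                \<longrightarrow> qtraj qN qd \<tau> N n $ j = 0)) \<and>
       \<comment> \<open>(b)\<close>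
       (\<Sum>n\<in>{1..N}. \<tau> n) = T \<and>
       \<comment> \<open>(c)\<close>
       (\<forall>j\<in>Js 0. bu0 $ j = 0) \<and> (\<forall>k. k \<notin> Ks 0 \<longrightarrow> x0 $ k = 0) \<and>
       (\<forall>k\<in>Ks 0. bp0 $ k = 0) \<and> (\<forall>j. j \<notin> Js 0 \<longrightarrow> bq0 $ j = 0) \<and>
       (\<forall>k\<in>Ks (N + 1). bpN $ k = 0) \<and> (\<forall>j. j \<notin> Js (N + 1) \<longrightarrow> qN $ j = 0) \<and>
       (\<forall>j\<in>Js (N + 1). buN $ j = 0) \<and> (\<forall>k. k \<notin> Ks (N + 1) \<longrightarrow> bxN $ k = 0) \<and>
       \<comment> \<open>(d)\<close>
       A *v bu0 + x0 = \<beta> \<and> transpose A *v bpN - qN = \<gamma> \<and>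
       \<comment> \<open>(e)\<close>
       A *v buN + bxN - xtraj x0 xd \<tau> N = 0 \<and>
       transpose A *v bp0 - bq0 + qtraj qN qd \<tau> N 0 = 0 \<and>
       \<comment> \<open>nonnegativity\<close>
       (\<forall>j. 0 \<le> bu0 $ j \<and> 0 \<le> buN $ j \<and> 0 \<le> bq0 $ j) \<and>
       (\<forall>k. 0 \<le> bxN $ k \<and> 0 \<le> bp0 $ k \<and> 0 \<le> bpN $ k) \<and>
       (\<forall>n\<in>{1..N}. 0 \<le> \<tau> n) \<and>
       (\<forall>n\<le>N. (\<forall>k. 0 \<le> xtraj x0 xd \<tau> n $ k) \<and> (\<forall>j. 0 \<le> qtraj qN qd \<tau> N n $ j)))"

definition validity_region ::
  "real^'j::finite^'k::finite \<Rightarrow> nat \<Rightarrow> (nat \<Rightarrow> 'k set) \<Rightarrow> (nat \<Rightarrow> 'j set)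
   \<Rightarrow> (nat \<Rightarrow> real^'k) \<Rightarrow> (nat \<Rightarrow> real^'j) \<Rightarrow> ((real^'k) \<times> (real^'j) \<times> real) set" where
  "validity_region A N Ks Js xd qd =
     {(\<beta>, \<gamma>, T). 0 \<le> T \<and> base_seq_optimal A N Ks Js xd qd \<beta> \<gamma> T}"

end

theory Submission
  imports Defs
begin

text \<open>The base-sequence system is a finite system of homogeneous linear equations and inequalities
  in \<open>(\<beta>, \<gamma>, T)\<close> and its unknowns (the boundary values and the durations \<open>\<tau>\<^sub>n\<close>; the
  trajectories \<open>x\<^sup>n\<close>, \<open>q\<^sup>n\<close> are linear in them).  So the validity region is the projection
  onto \<open>(\<beta>, \<gamma>, T)\<close> of a polyhedral cone, and a projection of a polyhedral cone is again one:
  Fourier--Motzkin elimination removes the unknowns one at a time.\<close>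

text \<open>A homogeneous linear constraint \<open>g y t \<le> 0\<close> on a parameter \<open>y\<close> and unknowns \<open>t\<close> is encoded
  by the function \<open>g\<close>; only the unknowns indexed by \<open>I\<close> may occur in it.\<close>

definition linear_constraint :: "'i set \<Rightarrow> ('a::real_vector \<Rightarrow> ('i \<Rightarrow> real) \<Rightarrow> real) \<Rightarrow> bool" where
  "linear_constraint I g \<longleftrightarrow>
     (\<forall>y t t'. (\<forall>i\<in>I. t i = t' i) \<longrightarrow> g y t = g y t') \<and>
     (\<forall>y1 y2 t1 t2. g (y1 + y2) (\<lambda>i. t1 i + t2 i) = g y1 t1 + g y2 t2) \<and>
     (\<forall>r y t. g (r *\<^sub>R y) (\<lambda>i. r * t i) = r * g y t)"

definition feasible_params :: "('a \<Rightarrow> ('i \<Rightarrow> real) \<Rightarrow> real) set \<Rightarrow> 'a set" where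
  "feasible_params F = {y. \<exists>t. \<forall>g\<in>F. g y t \<le> 0}"

lemma linear_constraintI:
  assumes "\<And>y t t'. (\<And>i. i \<in> I \<Longrightarrow> t i = t' i) \<Longrightarrow> g y t = g y t'"
    and "\<And>y1 y2 t1 t2. g (y1 + y2) (\<lambda>i. t1 i + t2 i) = g y1 t1 + g y2 t2"
    and "\<And>r y t. g (r *\<^sub>R y) (\<lambda>i. r * t i) = r * g y t"
  shows "linear_constraint I g"
  unfolding linear_constraint_def using assms by blast

lemma linear_constraint_cong:
  "linear_constraint I g \<Longrightarrow> (\<And>i. i \<in> I \<Longrightarrow> t i = t' i) \<Longrightarrow> g y t = g y t'"
  unfolding linear_constraint_def by blast

lemma linear_constraint_add:
  "linear_constraint I g \<Longrightarrow> g (y1 + y2) (\<lambda>i. t1 i + t2 i) = g y1 t1 + g y2 t2"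
  unfolding linear_constraint_def by blast

lemma linear_constraint_scaleR:
  "linear_constraint I g \<Longrightarrow> g (r *\<^sub>R y) (\<lambda>i. r * t i) = r * g y t"
  unfolding linear_constraint_def by blast

lemma linear_constraint_zero: "linear_constraint I g \<Longrightarrow> g 0 (\<lambda>_. 0) = 0"
  using linear_constraint_scaleR[of I g 0 0 "\<lambda>_. 0"] by simp

lemma linear_constraint_plus:
  fixes g h :: "'a::real_vector \<Rightarrow> ('i \<Rightarrow> real) \<Rightarrow> real"
  assumes g: "linear_constraint I g" and h: "linear_constraint I h"
  shows "linear_constraint I (\<lambda>y t. g y t + h y t)"
proof (rule linear_constraintI)
  fix y and t t' :: "'i \<Rightarrow> real"
  assume "\<And>i. i \<in> I \<Longrightarrow> t i = t' i"
  then show "g y t + h y t = g y t' + h y t'"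
    using linear_constraint_cong[OF g] linear_constraint_cong[OF h] by metis
qed (simp_all add: linear_constraint_add[OF g] linear_constraint_add[OF h]
       linear_constraint_scaleR[OF g] linear_constraint_scaleR[OF h] algebra_simps)

lemma linear_constraint_mult_left:
  fixes g :: "'a::real_vector \<Rightarrow> ('i \<Rightarrow> real) \<Rightarrow> real"
  assumes g: "linear_constraint I g"
  shows "linear_constraint I (\<lambda>y t. c * g y t)"
proof (rule linear_constraintI)
  fix y and t t' :: "'i \<Rightarrow> real"
  assume "\<And>i. i \<in> I \<Longrightarrow> t i = t' i"
  then show "c * g y t = c * g y t'"
    using linear_constraint_cong[OF g] by metis
qed (simp_all add: linear_constraint_add[OF g] linear_constraint_scaleR[OF g] algebra_simps)

lemma linear_constraint_mult_right:
  "linear_constraint I g \<Longrightarrow> linear_constraint I (\<lambda>y t. g y t * c)"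
  using linear_constraint_mult_left[of I g c] by (simp add: mult.commute)

lemma linear_constraint_uminus:
  "linear_constraint I g \<Longrightarrow> linear_constraint I (\<lambda>y t. - g y t)"
  using linear_constraint_mult_left[of I g "- 1"] by simp

lemma linear_constraint_minus:
  "linear_constraint I g \<Longrightarrow> linear_constraint I h \<Longrightarrow> linear_constraint I (\<lambda>y t. g y t - h y t)"
  using linear_constraint_plus[of I g "\<lambda>y t. - h y t"] linear_constraint_uminus[of I h] by simp

lemma linear_constraint_sum:
  "finite S \<Longrightarrow> (\<And>s. s \<in> S \<Longrightarrow> linear_constraint I (g s))
    \<Longrightarrow> linear_constraint I (\<lambda>y t. \<Sum>s\<in>S. g s y t)"
proof (induction S rule: finite_induct)
  case empty
  show ?case by (intro linear_constraintI) simp_all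
next
  case (insert x F)
  then show ?case by (simp add: linear_constraint_plus)
qed

lemma linear_constraint_unknown: "i \<in> I \<Longrightarrow> linear_constraint I (\<lambda>y t. t i)"
  unfolding linear_constraint_def by simp

lemma linear_constraint_param: "linear f \<Longrightarrow> linear_constraint I (\<lambda>y t. f y)"
  by (intro linear_constraintI) (simp_all add: linear_add linear_scale)

lemma feasible_params_no_unknowns:
  assumes "\<And>g. g \<in> F \<Longrightarrow> linear_constraint {} g"
  shows "feasible_params F = (\<Inter>g\<in>F. {y. g y (\<lambda>_. 0) \<le> 0})"
proof (intro equalityI subsetI)
  fix y assume "y \<in> feasible_params F"
  then obtain t where t: "\<And>g. g \<in> F \<Longrightarrow> g y t \<le> 0" by (auto simp: feasible_params_def)
  have "g y (\<lambda>_. 0) \<le> 0" if "g \<in> F" for g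
    using linear_constraint_cong[OF assms[OF that], of "\<lambda>_. 0" t] t[OF that] by simp
  then show "y \<in> (\<Inter>g\<in>F. {y. g y (\<lambda>_. 0) \<le> 0})" by blast
qed (auto simp: feasible_params_def)

lemma polyhedron_linear_constraint_no_unknowns:
  fixes g :: "'a::euclidean_space \<Rightarrow> ('i \<Rightarrow> real) \<Rightarrow> real"
  assumes "linear_constraint {} g"
  shows "polyhedron {y. g y (\<lambda>_. 0) \<le> 0}"
proof -
  have "g (x + y) (\<lambda>_. 0) = g x (\<lambda>_. 0) + g y (\<lambda>_. 0)" for x y
    using linear_constraint_add[OF assms, of x y "\<lambda>_. 0" "\<lambda>_. 0"] by simp
  moreover have "g (c *\<^sub>R x) (\<lambda>_. 0) = c * g x (\<lambda>_. 0)" for c x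
    using linear_constraint_scaleR[OF assms, of c x "\<lambda>_. 0"] by simp
  ultimately have lin: "linear (\<lambda>y. g y (\<lambda>_. 0))"
    by (intro linearI) simp_all
  define a where "a = adjoint (\<lambda>y. g y (\<lambda>_. 0)) 1"
  have "g y (\<lambda>_. 0) = a \<bullet> y" for y
    using adjoint_works[OF lin, of y 1] by (simp add: a_def inner_commute)
  then show ?thesis
    using polyhedron_halfspace_le[of a 0] by simp
qed

definition coord_coeff :: "'i \<Rightarrow> ('a::real_vector \<Rightarrow> ('i \<Rightarrow> real) \<Rightarrow> real) \<Rightarrow> real" where
  "coord_coeff i g = g 0 (\<lambda>j. if j = i then 1 else 0)"

lemma linear_constraint_split_unknown:
  assumes "linear_constraint I g"
  shows "g y t = g y (t(i := 0)) + t i * coord_coeff i g"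
proof -
  define e where "e = (\<lambda>j. if j = i then 1 else (0::real))"
  have t: "(\<lambda>j. (t(i := 0)) j + t i * e j) = t"
    by (auto simp: fun_eq_iff e_def)
  have "g (y + 0) (\<lambda>j. (t(i := 0)) j + t i * e j) = g y (t(i := 0)) + g 0 (\<lambda>j. t i * e j)"
    by (rule linear_constraint_add[OF assms])
  then have "g y t = g y (t(i := 0)) + g 0 (\<lambda>j. t i * e j)"
    by (simp only: t add_0_right)
  moreover have "g 0 (\<lambda>j. t i * e j) = t i * coord_coeff i g"
    using linear_constraint_scaleR[OF assms, of "t i" 0 e]
    by (simp add: coord_coeff_def e_def[symmetric])
  ultimately show ?thesis by simp
qed

lemma linear_constraint_drop_unknown:
  fixes g :: "'a::real_vector \<Rightarrow> ('i \<Rightarrow> real) \<Rightarrow> real"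
  assumes g: "linear_constraint (insert i I) g"
  shows "linear_constraint I (\<lambda>y t. g y (t(i := 0)))"
proof (rule linear_constraintI)
  fix y and t t' :: "'i \<Rightarrow> real"
  assume "\<And>j. j \<in> I \<Longrightarrow> t j = t' j"
  then show "g y (t(i := 0)) = g y (t'(i := 0))"
    by (intro linear_constraint_cong[OF g]) auto
next
  fix y1 y2 and t1 t2 :: "'i \<Rightarrow> real"
  have "(\<lambda>j. t1 j + t2 j)(i := 0) = (\<lambda>j. (t1(i := 0)) j + (t2(i := 0)) j)"
    by (auto simp: fun_eq_iff)
  then show "g (y1 + y2) ((\<lambda>j. t1 j + t2 j)(i := 0)) = g y1 (t1(i := 0)) + g y2 (t2(i := 0))"
    by (simp only: linear_constraint_add[OF g])
next
  fix r y and t :: "'i \<Rightarrow> real"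
  have "(\<lambda>j. r * t j)(i := 0) = (\<lambda>j. r * (t(i := 0)) j)"
    by (auto simp: fun_eq_iff)
  then show "g (r *\<^sub>R y) ((\<lambda>j. r * t j)(i := 0)) = r * g y (t(i := 0))"
    by (simp only: linear_constraint_scaleR[OF g])
qed

text \<open>Fourier--Motzkin elimination of the unknown \<open>t i\<close>: keep the constraints not involving it,
  and add the positive combination of each upper and each lower bound on it in which it cancels.\<close>

definition fm_eliminate ::
  "'i \<Rightarrow> ('a::real_vector \<Rightarrow> ('i \<Rightarrow> real) \<Rightarrow> real) set \<Rightarrow> ('a \<Rightarrow> ('i \<Rightarrow> real) \<Rightarrow> real) set" where
  "fm_eliminate i F =
     (\<lambda>g y t. g y (t(i := 0))) ` {g \<in> F. coord_coeff i g = 0} \<union>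
     (\<lambda>(p, n) y t. - coord_coeff i n * p y (t(i := 0)) + coord_coeff i p * n y (t(i := 0)))
       ` {(p, n) \<in> F \<times> F. coord_coeff i p > 0 \<and> coord_coeff i n < 0}"

lemma finite_fm_eliminate: "finite F \<Longrightarrow> finite (fm_eliminate i F)"
  unfolding fm_eliminate_def by (auto intro: finite_subset[of _ "F \<times> F"])

lemma linear_constraint_fm_eliminate:
  assumes "\<And>g. g \<in> F \<Longrightarrow> linear_constraint (insert i I) g" and "h \<in> fm_eliminate i F"
  shows "linear_constraint I h"
  using assms unfolding fm_eliminate_def
  by (auto intro!: linear_constraint_minus linear_constraint_mult_left linear_constraint_drop_unknown)

lemma feasible_params_subset_fm_eliminate:
  assumes lin: "\<And>g. g \<in> F \<Longrightarrow> linear_constraint (insert i I) g"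
  shows "feasible_params F \<subseteq> feasible_params (fm_eliminate i F)"
proof
  fix y assume "y \<in> feasible_params F"
  then obtain t where t: "\<And>g. g \<in> F \<Longrightarrow> g y t \<le> 0" by (auto simp: feasible_params_def)
  have split: "g y (t(i := 0)) = g y t - t i * coord_coeff i g" if "g \<in> F" for g
    using linear_constraint_split_unknown[OF lin[OF that], of y t i] by linarith
  have "h y t \<le> 0" if "h \<in> fm_eliminate i F" for h
    using that unfolding fm_eliminate_def
  proof (elim UnE imageE CollectE; clarsimp)
    fix p n assume p: "p \<in> F" "coord_coeff i p > 0" and n: "n \<in> F" "coord_coeff i n < 0"
    have "coord_coeff i p * n y (t(i := 0)) - coord_coeff i n * p y (t(i := 0))
        = coord_coeff i p * n y t - coord_coeff i n * p y t"
      unfolding split[OF p(1)] split[OF n(1)] by (simp add: algebra_simps)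
    moreover have "coord_coeff i p * n y t \<le> 0"
      using t[OF n(1)] p(2) by (simp add: mult_nonneg_nonpos)
    moreover have "0 \<le> coord_coeff i n * p y t"
      using t[OF p(1)] n(2) by (simp add: mult_nonpos_nonpos)
    ultimately show "coord_coeff i p * n y (t(i := 0)) \<le> coord_coeff i n * p y (t(i := 0))"
      by linarith
  qed (simp add: split t)
  then show "y \<in> feasible_params (fm_eliminate i F)" by (auto simp: feasible_params_def)
qed

lemma exists_between_finite_bounds:
  fixes L U :: "real set"
  assumes "finite L" "finite U" and "\<And>l u. l \<in> L \<Longrightarrow> u \<in> U \<Longrightarrow> l \<le> u"
  obtains s where "\<And>l. l \<in> L \<Longrightarrow> l \<le> s" and "\<And>u. u \<in> U \<Longrightarrow> s \<le> u"
proof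
  define s where "s = (if L = {} then if U = {} then 0 else Min U else Max L)"
  show "l \<le> s" if "l \<in> L" for l
    using that assms(1) by (auto simp: s_def)
  show "s \<le> u" if u: "u \<in> U" for u
  proof (cases "L = {}")
    case False
    then show ?thesis using u assms Max_in[OF assms(1) False] by (simp add: s_def)
  qed (use u assms(2) in \<open>auto simp: s_def\<close>)
qed

lemma fm_eliminate_extend_solution:
  assumes fin: "finite F" and lin: "\<And>g. g \<in> F \<Longrightarrow> linear_constraint (insert i I) g"
    and sol: "\<And>h. h \<in> fm_eliminate i F \<Longrightarrow> h y t \<le> 0"
  obtains s where "\<And>g. g \<in> F \<Longrightarrow> g y (t(i := s)) \<le> 0"
proof -
  let ?r = "\<lambda>g. g y (t(i := 0))" and ?\<kappa> = "coord_coeff i"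
  have split: "g y (t(i := s)) = ?r g + s * ?\<kappa> g" if "g \<in> F" for g s
    using linear_constraint_split_unknown[OF lin[OF that], of y "t(i := s)" i] by simp
  define bound where "bound g = - ?r g / ?\<kappa> g" for g
  have bound_le: "bound n \<le> bound p"
    if n: "n \<in> F" "?\<kappa> n < 0" and p: "p \<in> F" "?\<kappa> p > 0" for n p
  proof -
    have "(\<lambda>y t. - ?\<kappa> n * p y (t(i := 0)) + ?\<kappa> p * n y (t(i := 0))) \<in> fm_eliminate i F"
      unfolding fm_eliminate_def using n p by (intro UnI2 image_eqI[where x = "(p, n)"]) auto
    from sol[OF this] have comb: "- ?\<kappa> n * ?r p + ?\<kappa> p * ?r n \<le> 0"
      by simp
    have diff: "bound n - bound p = (- ?\<kappa> n * ?r p + ?\<kappa> p * ?r n) / (- ?\<kappa> n * ?\<kappa> p)"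
      using n(2) p(2) unfolding bound_def by (simp add: field_simps)
    have pos: "- ?\<kappa> n * ?\<kappa> p > 0"
      using n(2) p(2) by (simp add: mult_neg_pos)
    have "bound n - bound p \<le> 0"
      unfolding diff by (rule divide_nonpos_pos[OF comb pos])
    then show ?thesis by simp
  qed
  define lower where "lower = bound ` {n \<in> F. ?\<kappa> n < 0}"
  define upper where "upper = bound ` {p \<in> F. ?\<kappa> p > 0}"
  have "finite lower" "finite upper"
    using fin by (simp_all add: lower_def upper_def)
  moreover have "l \<le> u" if "l \<in> lower" "u \<in> upper" for l u
  proof -
    from that obtain n p where "n \<in> F" "?\<kappa> n < 0" "l = bound n" "p \<in> F" "?\<kappa> p > 0" "u = bound p"
      unfolding lower_def upper_def by blast
    then show ?thesis using bound_le by simp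
  qed
  ultimately obtain s where lower: "\<And>l. l \<in> lower \<Longrightarrow> l \<le> s" and upper: "\<And>u. u \<in> upper \<Longrightarrow> s \<le> u"
    using exists_between_finite_bounds by blast
  have "g y (t(i := s)) \<le> 0" if g: "g \<in> F" for g
  proof (cases "?\<kappa> g" "0::real" rule: linorder_cases)
    case less
    have "bound g \<le> s" using g less by (intro lower) (simp add: lower_def)
    then have "s * ?\<kappa> g \<le> bound g * ?\<kappa> g"
      using less by (intro mult_right_mono_neg) auto
    with less show ?thesis
      using split[OF g, of s] unfolding bound_def by simp
  next
    case equal
    then have "(\<lambda>y t. g y (t(i := 0))) \<in> fm_eliminate i F"
      unfolding fm_eliminate_def using g by blast
    from sol[OF this] show ?thesis
      using split[OF g, of s] equal by simp
  next
    case greater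
    have "s \<le> bound g" using g greater by (intro upper) (simp add: upper_def)
    then have "s * ?\<kappa> g \<le> bound g * ?\<kappa> g"
      using greater by (intro mult_right_mono) auto
    with greater show ?thesis
      using split[OF g, of s] unfolding bound_def by simp
  qed
  then show ?thesis by (rule that)
qed

lemma feasible_params_fm_eliminate:
  assumes "finite F" and "\<And>g. g \<in> F \<Longrightarrow> linear_constraint (insert i I) g"
  shows "feasible_params (fm_eliminate i F) = feasible_params F"
proof
  show "feasible_params (fm_eliminate i F) \<subseteq> feasible_params F"
  proof
    fix y assume "y \<in> feasible_params (fm_eliminate i F)"
    then obtain t where sol: "\<And>h. h \<in> fm_eliminate i F \<Longrightarrow> h y t \<le> 0"
      by (auto simp: feasible_params_def)
    obtain s where "\<And>g. g \<in> F \<Longrightarrow> g y (t(i := s)) \<le> 0"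
      using assms(1) by (rule fm_eliminate_extend_solution) (use assms(2) sol in auto)
    then show "y \<in> feasible_params F"
      unfolding feasible_params_def by blast
  qed
qed (rule feasible_params_subset_fm_eliminate[OF assms(2)])

lemma polyhedron_feasible_params:
  fixes F :: "('a::euclidean_space \<Rightarrow> ('i \<Rightarrow> real) \<Rightarrow> real) set"
  assumes "finite I" "finite F" and "\<And>g. g \<in> F \<Longrightarrow> linear_constraint I g"
  shows "polyhedron (feasible_params F)"
  using assms
proof (induction I arbitrary: F rule: finite_induct)
  case empty
  then show ?case
    by (auto simp: feasible_params_no_unknowns
        intro!: polyhedron_Inter polyhedron_linear_constraint_no_unknowns)
next
  case (insert i I)
  then show ?case
    using feasible_params_fm_eliminate[of F i I] finite_fm_eliminate[of F i]
      linear_constraint_fm_eliminate[of F i I] by metis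
qed

lemma convex_cone_feasible_params:
  assumes "\<And>g. g \<in> F \<Longrightarrow> linear_constraint I g"
  shows "convex_cone (feasible_params F)"
  unfolding convex_cone_iff
proof (intro conjI ballI allI impI)
  have "\<forall>g\<in>F. g 0 (\<lambda>_. 0) \<le> 0"
    using assms linear_constraint_zero by fastforce
  then show "0 \<in> feasible_params F"
    unfolding feasible_params_def by blast
next
  fix x y assume "x \<in> feasible_params F" "y \<in> feasible_params F"
  then obtain s t where "\<And>g. g \<in> F \<Longrightarrow> g x s \<le> 0" "\<And>g. g \<in> F \<Longrightarrow> g y t \<le> 0"
    by (auto simp: feasible_params_def)
  then have "\<And>g. g \<in> F \<Longrightarrow> g (x + y) (\<lambda>i. s i + t i) \<le> 0"
    using assms linear_constraint_add by (metis add_nonpos_nonpos)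
  then show "x + y \<in> feasible_params F" by (auto simp: feasible_params_def)
next
  fix x and c :: real assume "x \<in> feasible_params F" "0 \<le> c"
  then obtain t where "\<And>g. g \<in> F \<Longrightarrow> g x t \<le> 0" by (auto simp: feasible_params_def)
  then have "\<And>g. g \<in> F \<Longrightarrow> g (c *\<^sub>R x) (\<lambda>i. c * t i) \<le> 0"
    using assms linear_constraint_scaleR \<open>0 \<le> c\<close> by (metis mult_nonneg_nonpos)
  then show "c *\<^sub>R x \<in> feasible_params F" by (auto simp: feasible_params_def)
qed

lemma feasible_params_with_equalities:
  "{y. \<exists>t. (\<forall>g\<in>E. g y t = 0) \<and> (\<forall>g\<in>L. g y t \<le> 0)}
     = feasible_params (E \<union> (\<lambda>g y t. - g y t) ` E \<union> L)"
proof -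
  have "(\<forall>g\<in>E \<union> (\<lambda>g y t. - g y t) ` E \<union> L. g y t \<le> 0)
      \<longleftrightarrow> (\<forall>g\<in>E. g y t \<le> 0 \<and> - g y t \<le> 0) \<and> (\<forall>g\<in>L. g y t \<le> 0)" for y t
    by (simp add: ball_Un Ball_image_comp comp_def ball_conj_distrib)
  moreover have "(a \<le> 0 \<and> - a \<le> 0) \<longleftrightarrow> a = (0::real)" for a
    by auto
  ultimately show ?thesis
    unfolding feasible_params_def by simp
qed

lemma polyhedron_convex_cone_feasible_params_with_equalities:
  fixes E L :: "('a::euclidean_space \<Rightarrow> ('i \<Rightarrow> real) \<Rightarrow> real) set"
  assumes "finite I" "finite E" "finite L" and "\<And>g. g \<in> E \<union> L \<Longrightarrow> linear_constraint I g"
  shows "polyhedron {y. \<exists>t. (\<forall>g\<in>E. g y t = 0) \<and> (\<forall>g\<in>L. g y t \<le> 0)}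
    \<and> convex_cone {y. \<exists>t. (\<forall>g\<in>E. g y t = 0) \<and> (\<forall>g\<in>L. g y t \<le> 0)}"
proof -
  let ?F = "E \<union> (\<lambda>g y t. - g y t) ` E \<union> L"
  have "finite ?F"
    using assms(2,3) by simp
  moreover have "linear_constraint I g" if "g \<in> ?F" for g
    using that assms(4) linear_constraint_uminus by blast
  ultimately show ?thesis
    unfolding feasible_params_with_equalities
    using polyhedron_feasible_params[of I ?F] convex_cone_feasible_params[of ?F I] assms(1)
    by blast
qed

datatype ('k, 'j) unknown =
  Bu0 'j | BuN 'j | QN 'j | Bq0 'j | X0 'k | BxN 'k | Bp0 'k | BpN 'k | Tau nat

definition coord_vec :: "('a::finite \<Rightarrow> 'i) \<Rightarrow> ('i \<Rightarrow> real) \<Rightarrow> real^'a" where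
  "coord_vec f t = (\<chi> a. t (f a))"

lemma coord_vec_component [simp]: "coord_vec f t $ a = t (f a)"
  by (simp add: coord_vec_def)

lemma ex_coord_vecs_iff:
  "(\<exists>(bu0::real^'j::finite) (buN::real^'j) (qN::real^'j) (bq0::real^'j)
      (x0::real^'k::finite) (bxN::real^'k) (bp0::real^'k) (bpN::real^'k) (\<tau>::nat \<Rightarrow> real).
      P bu0 buN qN bq0 x0 bxN bp0 bpN \<tau>)
   \<longleftrightarrow> (\<exists>t::('k, 'j) unknown \<Rightarrow> real.
      P (coord_vec Bu0 t) (coord_vec BuN t) (coord_vec QN t) (coord_vec Bq0 t)
        (coord_vec X0 t) (coord_vec BxN t) (coord_vec Bp0 t) (coord_vec BpN t) (\<lambda>m. t (Tau m)))"
  (is "?lhs \<longleftrightarrow> ?rhs")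
proof
  assume ?lhs
  then obtain bu0 buN qN bq0 x0 bxN bp0 bpN \<tau> where P: "P bu0 buN qN bq0 x0 bxN bp0 bpN \<tau>"
    by blast
  define t where "t v = (case v of Bu0 j \<Rightarrow> bu0 $ j | BuN j \<Rightarrow> buN $ j | QN j \<Rightarrow> qN $ j
    | Bq0 j \<Rightarrow> bq0 $ j | X0 k \<Rightarrow> x0 $ k | BxN k \<Rightarrow> bxN $ k | Bp0 k \<Rightarrow> bp0 $ k | BpN k \<Rightarrow> bpN $ k
    | Tau m \<Rightarrow> \<tau> m)" for v
  have "coord_vec Bu0 t = bu0" "coord_vec BuN t = buN" "coord_vec QN t = qN" "coord_vec Bq0 t = bq0"
    "coord_vec X0 t = x0" "coord_vec BxN t = bxN" "coord_vec Bp0 t = bp0" "coord_vec BpN t = bpN"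
    "(\<lambda>m. t (Tau m)) = \<tau>"
    by (simp_all add: vec_eq_iff t_def)
  with P show ?rhs by metis
qed blast

abbreviation traj_x :: "(nat \<Rightarrow> real^'k::finite) \<Rightarrow> (('k, 'j) unknown \<Rightarrow> real) \<Rightarrow> nat \<Rightarrow> real^'k" where
  "traj_x xd t n \<equiv> xtraj (coord_vec X0 t) xd (\<lambda>m. t (Tau m)) n"

abbreviation traj_q ::
  "nat \<Rightarrow> (nat \<Rightarrow> real^'j::finite) \<Rightarrow> (('k, 'j) unknown \<Rightarrow> real) \<Rightarrow> nat \<Rightarrow> real^'j" where
  "traj_q N qd t n \<equiv> qtraj (coord_vec QN t) qd (\<lambda>m. t (Tau m)) N n"

abbreviation leaving :: "(nat \<Rightarrow> 'k set) \<Rightarrow> (nat \<Rightarrow> 'j set) \<Rightarrow> nat \<Rightarrow> ('k + 'j) set" where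
  "leaving Ks Js n \<equiv> basic_vars (Ks n) (Js n) - basic_vars (Ks (Suc n)) (Js (Suc n))"

type_synonym ('k, 'j) bss_constraint =
  "(real^'k) \<times> (real^'j) \<times> real \<Rightarrow> (('k, 'j) unknown \<Rightarrow> real) \<Rightarrow> real"

definition bss_equalities ::
  "real^'j::finite^'k::finite \<Rightarrow> nat \<Rightarrow> (nat \<Rightarrow> 'k set) \<Rightarrow> (nat \<Rightarrow> 'j set)
   \<Rightarrow> (nat \<Rightarrow> real^'k) \<Rightarrow> (nat \<Rightarrow> real^'j) \<Rightarrow> ('k, 'j) bss_constraint set" where
  "bss_equalities A N Ks Js xd qd =
     (\<lambda>(n, k) y t. traj_x xd t n $ k) ` {(n, k). n \<in> {1..<N} \<and> Inl k \<in> leaving Ks Js n}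
   \<union> (\<lambda>(n, j) y t. traj_q N qd t n $ j) ` {(n, j). n \<in> {1..<N} \<and> Inr j \<in> leaving Ks Js n}
   \<union> {\<lambda>y t. (\<Sum>n\<in>{1..N}. t (Tau n)) - snd (snd y)}
   \<union> (\<lambda>v y t. t v) ` (Bu0 ` Js 0 \<union> X0 ` (- Ks 0) \<union> Bp0 ` Ks 0 \<union> Bq0 ` (- Js 0)
       \<union> BpN ` Ks (N + 1) \<union> QN ` (- Js (N + 1)) \<union> BuN ` Js (N + 1) \<union> BxN ` (- Ks (N + 1)))
   \<union> (\<lambda>k y t. (A *v coord_vec Bu0 t + coord_vec X0 t - fst y) $ k) ` UNIV
   \<union> (\<lambda>j y t. (transpose A *v coord_vec BpN t - coord_vec QN t - fst (snd y)) $ j) ` UNIV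
   \<union> (\<lambda>k y t. (A *v coord_vec BuN t + coord_vec BxN t - traj_x xd t N) $ k) ` UNIV
   \<union> (\<lambda>j y t. (transpose A *v coord_vec Bp0 t - coord_vec Bq0 t + traj_q N qd t 0) $ j) ` UNIV"

definition bss_inequalities ::
  "nat \<Rightarrow> (nat \<Rightarrow> real^'k::finite) \<Rightarrow> (nat \<Rightarrow> real^'j::finite) \<Rightarrow> ('k, 'j) bss_constraint set" where
  "bss_inequalities N xd qd =
     (\<lambda>v y t. - t v) ` (range Bu0 \<union> range BuN \<union> range Bq0 \<union> range BxN \<union> range Bp0 \<union> range BpN
       \<union> Tau ` {1..N})
   \<union> (\<lambda>(n, k) y t. - traj_x xd t n $ k) ` ({..N} \<times> UNIV)
   \<union> (\<lambda>(n, j) y t. - traj_q N qd t n $ j) ` ({..N} \<times> UNIV)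
   \<union> {\<lambda>y t. - snd (snd y)}"

lemma ball_bss_equalities_iff:
  "(\<forall>g\<in>bss_equalities A N Ks Js xd qd. g (\<beta>, \<gamma>, T) t = 0) \<longleftrightarrow>
     (\<forall>n\<in>{1..<N}.
        (\<forall>k. Inl k \<in> leaving Ks Js n \<longrightarrow> traj_x xd t n $ k = 0) \<and>
        (\<forall>j. Inr j \<in> leaving Ks Js n \<longrightarrow> traj_q N qd t n $ j = 0)) \<and>
     (\<Sum>n\<in>{1..N}. t (Tau n)) = T \<and>
     (\<forall>j\<in>Js 0. coord_vec Bu0 t $ j = 0) \<and> (\<forall>k. k \<notin> Ks 0 \<longrightarrow> coord_vec X0 t $ k = 0) \<and>
     (\<forall>k\<in>Ks 0. coord_vec Bp0 t $ k = 0) \<and> (\<forall>j. j \<notin> Js 0 \<longrightarrow> coord_vec Bq0 t $ j = 0) \<and>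
     (\<forall>k\<in>Ks (N + 1). coord_vec BpN t $ k = 0) \<and> (\<forall>j. j \<notin> Js (N + 1) \<longrightarrow> coord_vec QN t $ j = 0) \<and>
     (\<forall>j\<in>Js (N + 1). coord_vec BuN t $ j = 0) \<and> (\<forall>k. k \<notin> Ks (N + 1) \<longrightarrow> coord_vec BxN t $ k = 0) \<and>
     A *v coord_vec Bu0 t + coord_vec X0 t = \<beta> \<and> transpose A *v coord_vec BpN t - coord_vec QN t = \<gamma> \<and>
     A *v coord_vec BuN t + coord_vec BxN t - traj_x xd t N = 0 \<and>
     transpose A *v coord_vec Bp0 t - coord_vec Bq0 t + traj_q N qd t 0 = 0"
  unfolding bss_equalities_def ball_Un Ball_image_comp
  by (simp add: vec_eq_iff ball_conj_distrib Ball_def) blast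

lemma ball_bss_inequalities_iff:
  "(\<forall>g\<in>bss_inequalities N xd qd. g (\<beta>, \<gamma>, T) t \<le> 0) \<longleftrightarrow>
     0 \<le> T \<and>
     (\<forall>j. 0 \<le> coord_vec Bu0 t $ j \<and> 0 \<le> coord_vec BuN t $ j \<and> 0 \<le> coord_vec Bq0 t $ j) \<and>
     (\<forall>k. 0 \<le> coord_vec BxN t $ k \<and> 0 \<le> coord_vec Bp0 t $ k \<and> 0 \<le> coord_vec BpN t $ k) \<and>
     (\<forall>n\<in>{1..N}. 0 \<le> t (Tau n)) \<and>
     (\<forall>n\<le>N. (\<forall>k. 0 \<le> traj_x xd t n $ k) \<and> (\<forall>j. 0 \<le> traj_q N qd t n $ j))"
  unfolding bss_inequalities_def ball_Un Ball_image_comp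
  by (simp add: ball_conj_distrib Ball_def all_conj_distrib) blast

lemma validity_region_eq_bss_solutions:
  fixes A :: "real^'j::finite^'k::finite"
  shows "validity_region A N Ks Js xd qd =
     {y. \<exists>t. (\<forall>g\<in>bss_equalities A N Ks Js xd qd. g y t = 0)
             \<and> (\<forall>g\<in>bss_inequalities N xd qd. g y t \<le> 0)}" (is "_ = ?solutions")
proof (intro set_eqI)
  fix y :: "(real^'k) \<times> (real^'j) \<times> real"
  obtain \<beta> \<gamma> T where y: "y = (\<beta>, \<gamma>, T)"
    by (cases y)
  show "y \<in> validity_region A N Ks Js xd qd \<longleftrightarrow> y \<in> ?solutions"
    unfolding y validity_region_def base_seq_optimal_def mem_Collect_eq prod.case ex_coord_vecs_iff
      ball_bss_equalities_iff ball_bss_inequalities_iff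
    by blast
qed

definition bss_unknowns :: "nat \<Rightarrow> ('k, 'j) unknown set" where
  "bss_unknowns N = range Bu0 \<union> range BuN \<union> range QN \<union> range Bq0 \<union> range X0 \<union> range BxN
     \<union> range Bp0 \<union> range BpN \<union> Tau ` {1..N}"

lemma finite_bss_unknowns: "finite (bss_unknowns N :: ('k::finite, 'j::finite) unknown set)"
  by (simp add: bss_unknowns_def)

lemma matrix_vector_mult_component_sum: "(A *v v) $ k = (\<Sum>j\<in>UNIV. A $ k $ j * v $ j)"
  by (simp add: matrix_vector_mult_def)

lemma vector_matrix_mult_component_sum: "(v v* A) $ j = (\<Sum>k\<in>UNIV. v $ k * A $ k $ j)"
  by (simp add: vector_matrix_mult_def)

lemma xtraj_component: "xtraj x0 xd \<tau> n $ k = x0 $ k + (\<Sum>m\<in>{1..n}. \<tau> m * xd m $ k)"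
  by (simp add: xtraj_def)

lemma qtraj_component: "qtraj qN qd \<tau> N n $ j = qN $ j + (\<Sum>m\<in>{n<..N}. \<tau> m * qd m $ j)"
  by (simp add: qtraj_def)

lemmas bss_component_simps =
  matrix_vector_mult_component_sum vector_matrix_mult_component_sum xtraj_component qtraj_component

lemmas linear_constraint_intros =
  linear_constraint_plus linear_constraint_minus linear_constraint_uminus linear_constraint_sum
  linear_constraint_mult_left linear_constraint_mult_right linear_constraint_unknown
  linear_constraint_param

lemma linear_constraint_bss_equalities:
  "g \<in> bss_equalities A N Ks Js xd qd \<Longrightarrow> linear_constraint (bss_unknowns N) g"
  unfolding bss_equalities_def
  by (auto simp: bss_component_simps bss_unknowns_def intro!: linear_constraint_intros linearI)

lemma linear_constraint_bss_inequalities: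
  "g \<in> bss_inequalities N xd qd \<Longrightarrow> linear_constraint (bss_unknowns N) g"
  unfolding bss_inequalities_def
  by (auto simp: bss_component_simps bss_unknowns_def intro!: linear_constraint_intros linearI)

lemma finite_bss_equalities:
  "finite (bss_equalities A N Ks Js xd qd :: ('k::finite, 'j::finite) bss_constraint set)"
proof -
  have "finite {(n, k :: 'k). n \<in> {1..<N} \<and> Inl k \<in> leaving Ks Js n}"
    by (rule finite_subset[of _ "{1..<N} \<times> UNIV"]) auto
  moreover have "finite {(n, j :: 'j). n \<in> {1..<N} \<and> Inr j \<in> leaving Ks Js n}"
    by (rule finite_subset[of _ "{1..<N} \<times> UNIV"]) auto
  ultimately show ?thesis
    unfolding bss_equalities_def by simp
qed

lemma finite_bss_inequalities:
  "finite (bss_inequalities N xd qd :: ('k::finite, 'j::finite) bss_constraint set)"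
  by (simp add: bss_inequalities_def)

theorem mainTheorem6:
  fixes A :: "real^'j::finite^'k::finite" and b :: "real^'k" and c :: "real^'j"
    and N :: nat and Ks :: "nat \<Rightarrow> 'k set" and Js :: "nat \<Rightarrow> 'j set"
    and u :: "nat \<Rightarrow> real^'j" and xd :: "nat \<Rightarrow> real^'k"
    and p :: "nat \<Rightarrow> real^'k" and qd :: "nat \<Rightarrow> real^'j"
  assumes "base_sequence A b c N Ks Js u xd p qd"
  shows "polyhedron (validity_region A N Ks Js xd qd) \<and> convex_cone (validity_region A N Ks Js xd qd)"
  unfolding validity_region_eq_bss_solutions
  by (rule polyhedron_convex_cone_feasible_params_with_equalities[OF finite_bss_unknowns
        finite_bss_equalities finite_bss_inequalities])
    (auto intro: linear_constraint_bss_equalities linear_constraint_bss_inequalities)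

end
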